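(* Consider an instance of the destructive weighted-\$-protection problem and let $\mathcal{V}_F\subseteq\mathcal{V}$ be a set of awarded voters. Suppose the attacker succeeds (i.e., makes some candidate $c\neq c_m$ obtain a total score strictly higher than $c_m$) by bribing a set $\mathcal{V}_B\subseteq\mathcal{V}\setminus\mathcal{V}_F$ with $\sum_{v_j\in\mathcal{V}_B}p_j^b\le B$. If $v_{j'}\prec v_j$, $v_{j'}\in\mathcal{V}_B$ and $v_j\notin\mathcal{V}_F\cup\mathcal{V}_B$, then the attacker can also succeed by bribing $(\mathcal{V}_B\setminus\{v_{j'}\})\cup\{v_j\}$ (within budget $B$).
   Context: Election model. Candidates $\mathcal{C}=\{c_1,\dots,c_m\}$, voters $\mathcal{V}=\{v_1,\dots,v_n\}$; voter $v_j$ has a preference list $\tau_j$ (a linear order of $\mathcal{C}$), weight $w_j\in\mathbb{Z}_{>0}$, awarding price $p_j^a\in\mathbb{Z}_{>0}$, bribing price $p_j^b\in\mathbb{Z}_{>0}$. A scoring rule $\alpha=(\alpha_1\ge\cdots\ge\alpha_m)$ of nonnegative integers gives the candidate at position $z$ of $v_j$'s list $w_j\alpha_z$ points; total score is the sum over voters. In the destructive weighted-\$-protection problem, $c_m$ has maximum total score without bribery; there is a defense budget $F$ and an attack budget $B$; the attacker may choose $\mathcal{V}_B\subseteq\mathcal{V}\setminus\mathcal{V}_F$ with total bribing price at most $B$ and replace each list in $\mathcal{V}_B$ by an arbitrary list; it succeeds if some $c\neq c_m$ gets a strictly higher total score than $c_m$. Dominance: $v_{j'}\prec v_j$ ($v_j$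 dominates $v_{j'}$) if either (i) $\tau_j=\tau_{j'}$, $w_j\ge w_{j'}$, $p_j^a\le p_{j'}^a$, $p_j^b\le p_{j'}^b$ with at least one of these three inequalities strict; or (ii) $\tau_j=\tau_{j'}$, $w_j=w_{j'}$, $p_j^a=p_{j'}^a$, $p_j^b=p_{j'}^b$ and $j'<j$. *)

theory Defs
  imports Main
begin

text \<open>Candidates are 1..m, the distinguished candidate c_m is m.
  Voters are 1..n. A preference list is a list of candidates (position z, 1-indexed,
  is element z-1), a linear order of all candidates.\<close>

definition is_pref :: "nat \<Rightarrow> nat list \<Rightarrow> bool" where
  "is_pref m l \<longleftrightarrow> distinct l \<and> set l = {1..m}"

definition vote_points :: "(nat \<Rightarrow> nat) \<Rightarrow> nat list \<Rightarrow> nat \<Rightarrow> nat" where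
  "vote_points alpha l c = (\<Sum>z<length l. if l ! z = c then alpha (Suc z) else 0)"

definition total_score ::
  "(nat \<Rightarrow> nat) \<Rightarrow> (nat \<Rightarrow> nat) \<Rightarrow> (nat \<Rightarrow> nat list) \<Rightarrow> nat \<Rightarrow> nat \<Rightarrow> nat" where
  "total_score alpha w tau n c = (\<Sum>j\<in>{1..n}. w j * vote_points alpha (tau j) c)"

definition attack_succeeds ::
  "nat \<Rightarrow> nat \<Rightarrow> (nat \<Rightarrow> nat) \<Rightarrow> (nat \<Rightarrow> nat) \<Rightarrow> (nat \<Rightarrow> nat list) \<Rightarrow> nat set \<Rightarrow> bool" where
  "attack_succeeds m n alpha w tau VB \<longleftrightarrow>
     (\<exists>tau'. (\<forall>j. j \<notin> VB \<longrightarrow> tau' j = tau j) \<and> (\<forall>j\<in>VB. is_pref m (tau' j)) \<and>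
        (\<exists>c\<in>{1..m}. c \<noteq> m \<and> total_score alpha w tau' n c > total_score alpha w tau' n m))"

text \<open>dominated tau w pa pb j' j means v_j' \<prec> v_j (v_j dominates v_j').\<close>
definition dominated ::
  "(nat \<Rightarrow> nat list) \<Rightarrow> (nat \<Rightarrow> nat) \<Rightarrow> (nat \<Rightarrow> nat) \<Rightarrow> (nat \<Rightarrow> nat) \<Rightarrow> nat \<Rightarrow> nat \<Rightarrow> bool" where
  "dominated tau w pa pb j' j \<longleftrightarrow>
     (tau j = tau j' \<and> w j \<ge> w j' \<and> pa j \<le> pa j' \<and> pb j \<le> pb j' \<and>
        (w j > w j' \<or> pa j < pa j' \<or> pb j < pb j'))
   \<or> (tau j = tau j' \<and> w j = w j' \<and> pa j = pa j' \<and> pb j = pb j' \<and> j' < j)"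

end

theory Submission
  imports Defs
begin

text \<open>Let \<open>\<tau>'\<close> be a successful bribery of \<open>V\<^sub>B\<close> under which \<open>c\<close> beats \<open>c\<^sub>m\<close>. Since
  \<open>v\<^sub>j\<close> and \<open>v\<^sub>j\<^sub>'\<close> have the same list, give \<open>v\<^sub>j\<^sub>'\<close> its original list back and give \<open>v\<^sub>j\<close>
  a list ranking \<open>c\<close> first and \<open>c\<^sub>m\<close> last. With \<open>A = \<alpha>\<^sub>1 - \<alpha>\<^sub>m\<close> the largest possible
  per-vote margin of \<open>c\<close> over \<open>c\<^sub>m\<close>, and \<open>\<delta>\<close>, \<open>\<delta>'\<close> the margins of the original list of
  \<open>v\<^sub>j\<^sub>'\<close> and of its bribed list, the total margin changes by
  \<open>(w\<^sub>j - w\<^sub>j\<^sub>') (A - \<delta>) + w\<^sub>j\<^sub>' (A - \<delta>') \<ge> 0\<close>, so \<open>c\<close> still wins. The bribing price does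
  not increase because \<open>p\<^sub>j\<^sup>b \<le> p\<^sub>j\<^sub>'\<^sup>b\<close>.\<close>

lemma is_pref_length: "is_pref m l \<Longrightarrow> length l = m"
  unfolding is_pref_def by (metis card_atLeastAtMost diff_Suc_1 distinct_card)

lemma vote_points_nth:
  assumes "distinct l" "z < length l"
  shows "vote_points alpha l (l ! z) = alpha (Suc z)"
proof -
  have "(\<Sum>z'<length l. if l ! z' = l ! z then alpha (Suc z') else 0)
      = (\<Sum>z'<length l. if z' = z then alpha (Suc z') else 0)"
    using assms by (intro sum.cong) (auto simp: nth_eq_iff_index_eq)
  then show ?thesis
    using assms by (simp add: vote_points_def)
qed

lemma vote_points_bounds:
  assumes "antimono_on {1..m} alpha" "is_pref m l" "c \<in> {1..m}"
  shows "alpha m \<le> vote_points alpha l c" "vote_points alpha l c \<le> alpha 1"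
proof -
  from assms(2,3) obtain z where z: "z < m" "l ! z = c"
    using is_pref_length[OF assms(2)] unfolding is_pref_def by (metis in_set_conv_nth)
  then have "vote_points alpha l c = alpha (Suc z)"
    using assms(2) vote_points_nth[of l z] is_pref_length
    unfolding is_pref_def by fastforce
  moreover have "alpha m \<le> alpha (Suc z)" "alpha (Suc z) \<le> alpha 1"
    using monotone_onD[OF assms(1), of "Suc z" m] monotone_onD[OF assms(1), of 1 "Suc z"] z
    by auto
  ultimately show "alpha m \<le> vote_points alpha l c" "vote_points alpha l c \<le> alpha 1"
    by simp_all
qed

definition vote_margin :: "(nat \<Rightarrow> nat) \<Rightarrow> nat list \<Rightarrow> nat \<Rightarrow> nat \<Rightarrow> int" where
  "vote_margin alpha l c d = int (vote_points alpha l c) - int (vote_points alpha l d)"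

lemma vote_margin_le:
  assumes "antimono_on {1..m} alpha" "is_pref m l" "c \<in> {1..m}" "d \<in> {1..m}"
  shows "vote_margin alpha l c d \<le> int (alpha 1) - int (alpha m)"
  using vote_points_bounds[OF assms(1,2,3)] vote_points_bounds[OF assms(1,2,4)]
  unfolding vote_margin_def by linarith

definition first_last_pref :: "nat \<Rightarrow> nat \<Rightarrow> nat \<Rightarrow> nat list" where
  "first_last_pref m c d = c # [x \<leftarrow> [1..<Suc m]. x \<noteq> c \<and> x \<noteq> d] @ [d]"

lemma is_pref_first_last_pref:
  "c \<in> {1..m} \<Longrightarrow> d \<in> {1..m} \<Longrightarrow> c \<noteq> d \<Longrightarrow> is_pref m (first_last_pref m c d)"
  unfolding first_last_pref_def is_pref_def by auto

lemma vote_margin_first_last_pref: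
  assumes "c \<in> {1..m}" "d \<in> {1..m}" "c \<noteq> d"
  shows "vote_margin alpha (first_last_pref m c d) c d = int (alpha 1) - int (alpha m)"
proof -
  let ?l = "first_last_pref m c d"
  have "is_pref m ?l" using is_pref_first_last_pref[OF assms] .
  then have dist: "distinct ?l" and len: "length ?l = m"
    using is_pref_length unfolding is_pref_def by auto
  have "0 < m" using assms by auto
  have "vote_points alpha ?l c = alpha 1"
    using vote_points_nth[OF dist, of 0 alpha] len \<open>0 < m\<close> by (simp add: first_last_pref_def)
  moreover have "?l ! (m - 1) = d"
    using len unfolding first_last_pref_def by (metis last_conv_nth last_snoc append_Cons list.discI)
  then have "vote_points alpha ?l d = alpha m"
    using vote_points_nth[OF dist, of "m - 1" alpha] len \<open>0 < m\<close> by simp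
  ultimately show ?thesis
    unfolding vote_margin_def by simp
qed

definition score_margin ::
  "(nat \<Rightarrow> nat) \<Rightarrow> (nat \<Rightarrow> nat) \<Rightarrow> (nat \<Rightarrow> nat list) \<Rightarrow> nat \<Rightarrow> nat \<Rightarrow> nat \<Rightarrow> int" where
  "score_margin alpha w t n c d = int (total_score alpha w t n c) - int (total_score alpha w t n d)"

lemma score_margin_eq_sum:
  "score_margin alpha w t n c d = (\<Sum>i\<in>{1..n}. int (w i) * vote_margin alpha (t i) c d)"
  unfolding score_margin_def total_score_def vote_margin_def
  by (simp add: sum_subtractf algebra_simps)

lemma score_margin_fun_upd:
  assumes "i \<in> {1..n}"
  shows "score_margin alpha w (t(i := l)) n c d
    = score_margin alpha w t n c d + int (w i) * (vote_margin alpha l c d - vote_margin alpha (t i) c d)"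
proof -
  let ?f = "\<lambda>t k. int (w k) * vote_margin alpha (t k) c d"
  have "(\<Sum>k\<in>{1..n}. ?f (t(i := l)) k) = ?f (t(i := l)) i + (\<Sum>k\<in>{1..n} - {i}. ?f (t(i := l)) k)"
    using assms by (rule sum.remove[OF finite_atLeastAtMost])
  also have "(\<Sum>k\<in>{1..n} - {i}. ?f (t(i := l)) k) = (\<Sum>k\<in>{1..n} - {i}. ?f t k)"
    by (intro sum.cong) auto
  also have "\<dots> = (\<Sum>k\<in>{1..n}. ?f t k) - ?f t i"
    using assms by (simp add: sum.remove[OF finite_atLeastAtMost])
  finally show ?thesis
    unfolding score_margin_eq_sum by (simp add: algebra_simps)
qed

lemma attack_succeeds_iff_score_margin:
  "attack_succeeds m n alpha w tau VB \<longleftrightarrow>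
     (\<exists>t. (\<forall>i. i \<notin> VB \<longrightarrow> t i = tau i) \<and> (\<forall>i\<in>VB. is_pref m (t i)) \<and>
        (\<exists>c\<in>{1..m}. c \<noteq> m \<and> score_margin alpha w t n c m > 0))"
  unfolding attack_succeeds_def score_margin_def by simp

lemma attack_succeeds_exchange:
  assumes alpha: "antimono_on {1..m} alpha"
    and succ: "attack_succeeds m n alpha w tau VB"
    and j'_in: "j' \<in> VB" "j' \<in> {1..n}" and j_in: "j \<notin> VB" "j \<in> {1..n}"
    and same_pref: "tau j = tau j'" and pref: "is_pref m (tau j')"
    and weight: "w j' \<le> w j"
  shows "attack_succeeds m n alpha w tau ((VB - {j'}) \<union> {j})"
proof -
  from succ obtain tau' c where unbribed: "\<forall>i. i \<notin> VB \<longrightarrow> tau' i = tau i"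
      and bribed: "\<forall>i\<in>VB. is_pref m (tau' i)" and c: "c \<in> {1..m}" "c \<noteq> m"
      and wins: "score_margin alpha w tau' n c m > 0"
    unfolding attack_succeeds_iff_score_margin by blast
  have m: "m \<in> {1..m}" and jj': "j \<noteq> j'" using c j'_in j_in by auto
  define L where "L = first_last_pref m c m"
  define tau'' where "tau'' = tau'(j := L, j' := tau j')"
  define A where "A = int (alpha 1) - int (alpha m)"
  define \<delta> where "\<delta> = vote_margin alpha (tau j') c m"
  define \<delta>' where "\<delta>' = vote_margin alpha (tau' j') c m"
  have "\<delta> \<le> A" "\<delta>' \<le> A"
    using vote_margin_le[OF alpha pref c(1) m] vote_margin_le[OF alpha _ c(1) m] bribed j'_in
    unfolding A_def \<delta>_def \<delta>'_def by auto
  then have "int (w j') * (A - \<delta>) \<le> int (w j) * (A - \<delta>)" "0 \<le> int (w j') * (A - \<delta>')"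
    using weight by (simp_all add: mult_right_mono)
  then have gain: "0 \<le> int (w j) * (A - \<delta>) + int (w j') * (\<delta> - \<delta>')"
    by (simp add: algebra_simps)
  have "tau' j = tau j'"
    using unbribed j_in same_pref by simp
  then have "score_margin alpha w (tau'(j := L)) n c m
      = score_margin alpha w tau' n c m + int (w j) * (A - \<delta>)"
    using score_margin_fun_upd[OF j_in(2)] vote_margin_first_last_pref[OF c(1) m c(2)]
    unfolding L_def A_def \<delta>_def by simp
  moreover have "score_margin alpha w tau'' n c m
      = score_margin alpha w (tau'(j := L)) n c m + int (w j') * (\<delta> - \<delta>')"
    using score_margin_fun_upd[OF j'_in(2), of alpha w "tau'(j := L)" "tau j'"] jj'
    unfolding tau''_def \<delta>_def \<delta>'_def by simp
  ultimately have "score_margin alpha w tau'' n c m > 0"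
    using wins gain by linarith
  moreover have "\<forall>i. i \<notin> (VB - {j'}) \<union> {j} \<longrightarrow> tau'' i = tau i"
    using unbribed unfolding tau''_def by auto
  moreover have "\<forall>i\<in>(VB - {j'}) \<union> {j}. is_pref m (tau'' i)"
    using bribed is_pref_first_last_pref[OF c(1) m c(2)] jj' unfolding tau''_def L_def by auto
  ultimately show ?thesis
    using c unfolding attack_succeeds_iff_score_margin by blast
qed

lemma sum_exchange_le:
  fixes f :: "'a \<Rightarrow> 'b :: ordered_comm_monoid_add"
  assumes "finite S" "x \<in> S" "y \<notin> S" "f y \<le> f x"
  shows "sum f ((S - {x}) \<union> {y}) \<le> sum f S"
proof -
  have "sum f ((S - {x}) \<union> {y}) = f y + sum f (S - {x})"
    using assms by (simp add: add.commute)
  also have "\<dots> \<le> f x + sum f (S - {x})"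
    using assms(4) by (rule add_right_mono)
  also have "\<dots> = sum f S"
    using assms by (simp add: sum.remove)
  finally show ?thesis .
qed

theorem lemma5:
  fixes m n :: nat and alpha :: "nat \<Rightarrow> nat"
    and tau :: "nat \<Rightarrow> nat list" and w pa pb :: "nat \<Rightarrow> nat"
    and F B :: nat and VF VB :: "nat set" and j j' :: nat
  assumes m_pos: "m \<ge> 1"
    and alpha_mono: "\<And>z z'. 1 \<le> z \<Longrightarrow> z \<le> z' \<Longrightarrow> z' \<le> m \<Longrightarrow> alpha z' \<le> alpha z"
    and prefs: "\<And>i. i \<in> {1..n} \<Longrightarrow> is_pref m (tau i)"
    and w_pos: "\<And>i. i \<in> {1..n} \<Longrightarrow> w i > 0"
    and pa_pos: "\<And>i. i \<in> {1..n} \<Longrightarrow> pa i > 0"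
    and pb_pos: "\<And>i. i \<in> {1..n} \<Longrightarrow> pb i > 0"
    and cm_max: "\<And>c. c \<in> {1..m} \<Longrightarrow> total_score alpha w tau n c \<le> total_score alpha w tau n m"
    and VF_sub: "VF \<subseteq> {1..n}"
    and VF_budget: "sum pa VF \<le> F"
    and VB_sub: "VB \<subseteq> {1..n} - VF"
    and VB_budget: "sum pb VB \<le> B"
    and succ: "attack_succeeds m n alpha w tau VB"
    and dom: "dominated tau w pa pb j' j"
    and j'_in: "j' \<in> VB"
    and j_in: "j \<in> {1..n}"
    and j_out: "j \<notin> VF \<union> VB"
  shows "(VB - {j'}) \<union> {j} \<subseteq> {1..n} - VF
    \<and> sum pb ((VB - {j'}) \<union> {j}) \<le> B
    \<and> attack_succeeds m n alpha w tau ((VB - {j'}) \<union> {j})"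
proof (intro conjI)
  have same_pref: "tau j = tau j'" and weight: "w j' \<le> w j" and price: "pb j \<le> pb j'"
    using dom unfolding dominated_def by auto
  have j'_range: "j' \<in> {1..n}" using VB_sub j'_in by auto
  show "(VB - {j'}) \<union> {j} \<subseteq> {1..n} - VF"
    using VB_sub j_in j_out by auto
  have "finite VB" using VB_sub finite_subset by blast
  then show "sum pb ((VB - {j'}) \<union> {j}) \<le> B"
    using sum_exchange_le[of VB j' j pb] j'_in j_out price VB_budget by simp
  have "antimono_on {1..m} alpha"
    using alpha_mono by (intro monotone_onI) auto
  then show "attack_succeeds m n alpha w tau ((VB - {j'}) \<union> {j})"
    using attack_succeeds_exchange succ j'_in j'_range j_in j_out same_pref
      prefs[OF j'_range] weight by blast
qed

end
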